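(* Let $X_1,X_2$ be independent real random variables with densities symmetric about their means $\mu_1,\mu_2$ and positive on all of $\mathbb{R}$, and let $\Theta$ be a $[0,1]$-valued random variable with density $\pi$, independent of $(X_1,X_2)$. For $w,\theta\in[0,1]$ let $$L(w\mid\theta)=\theta\,\mathbf{E}\big[(X_1-\mu_1)^2\mathbf{1}\big((1-w)(X_2-\mu_2)^2\ge w(X_1-\mu_1)^2\big)\big]+(1-\theta)\,\mathbf{E}\big[(X_2-\mu_2)^2\mathbf{1}\big((1-w)(X_2-\mu_2)^2< w(X_1-\mu_1)^2\big)\big],$$ and for a weight vector $\bar w=(w_1,\dots,w_n)\in[0,1]^n$ let the ex ante expected loss of the receiver be $$\mathcal{L}(\bar w)=\int_0^1\min\{L(w_1\mid\theta),\dots,L(w_n\mid\theta)\}\,\pi(\theta)\,d\theta.$$ Suppose a social planner chooses a weight vector $\bar w^\star$ of the WQD policy that minimizes $\mathcal{L}$ over $[0,1]^n$. Then there exists a Bayesian Nash Equilibrium in which the platform uses the WQD policy with these weights (with messages labeled so that the weights are in increasing order).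
   Context: $[n]=\{1,\dots,n\}$. Game: the receiver observes $\Theta=\theta$ and sends $m=\psi(\theta)\in[n]$; the platform observes $(m,X_1=x_1,X_2=x_2)$ and chooses $s=\gamma(m,x_1,x_2)\in\{1,2\}$; the receiver observes $y=(s,x_s)$ and outputs $(\hat x_1,\hat x_2)=\eta(y,m)$. Both agents have loss $\ell=\theta(x_1-\hat x_1)^2+(1-\theta)(x_2-\hat x_2)^2$. Receiver's expected loss: $\mathcal{J}_R(m\mid\theta,\gamma,\eta)=\mathbf{E}[\ell\mid\Theta=\theta]$ (over $X_1,X_2$). Platform's expected loss: $\mathcal{J}_P(s\mid m,x_1,x_2,\psi,\eta)=\mathbf{E}[\ell\mid X_1=x_1,X_2=x_2,M=m]$ (over $\Theta$, with $M=\psi(\Theta)$). A triple $(\psi^\star,\gamma^\star,\eta^\star)$ is a Bayesian Nash Equilibrium if (1) for all $\theta\in[0,1]$ and $m\in[n]$, $\mathcal{J}_R(\psi^\star(\theta)\mid\theta,\gamma^\star,\eta^\star)\le\mathcal{J}_R(m\mid\theta,\gamma^\star,\eta^\star)$; (2) for all $m$, $(x_1,x_2)$, $s$, $\mathcal{J}_P(\gamma^\star(m,x_1,x_2)\mid m,x_1,x_2,\psi^\star,\eta^\star)\le\mathcal{J}_P(s\mid m,x_1,x_2,\psi^\star,\eta^\star)$; (3) $\eta^\star(y,m)=(\mathbf{E}[X_1\mid M=m,Y=y],\mathbf{E}[X_2\mid M=m,Y=y])$ under $\psi^\star,\gamma^\star$. A WQD (weighted-quadratic disclosure) policy with weights $w_1,\dots,w_n\in[0,1]$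 sets $\gamma(m,x_1,x_2)=1$ if $w_m(x_1-\mu_1)^2>(1-w_m)(x_2-\mu_2)^2$ and $2$ otherwise. *)

theory Defs
  imports "HOL-Analysis.Analysis"
begin

text \<open>Observed coordinate: y = (s, x_s).\<close>
definition xsel :: "nat \<Rightarrow> real \<Rightarrow> real \<Rightarrow> real" where
  "xsel s x1 x2 = (if s = 1 then x1 else x2)"

definition qloss :: "real \<Rightarrow> real \<Rightarrow> real \<Rightarrow> real \<times> real \<Rightarrow> real" where
  "qloss \<theta> x1 x2 xh = \<theta> * (x1 - fst xh)^2 + (1 - \<theta>) * (x2 - snd xh)^2"

definition EXX :: "(real \<Rightarrow> real) \<Rightarrow> (real \<Rightarrow> real) \<Rightarrow> (real \<Rightarrow> real \<Rightarrow> real) \<Rightarrow> real" where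
  "EXX f1 f2 g =
     (LINT z | (density lborel (\<lambda>x. ennreal (f1 x)) \<Otimes>\<^sub>M density lborel (\<lambda>x. ennreal (f2 x))).
        g (fst z) (snd z))"

definition JR :: "(real \<Rightarrow> real) \<Rightarrow> (real \<Rightarrow> real) \<Rightarrow> (nat \<Rightarrow> real \<Rightarrow> real \<Rightarrow> nat)
    \<Rightarrow> (nat \<times> real \<Rightarrow> nat \<Rightarrow> real \<times> real) \<Rightarrow> nat \<Rightarrow> real \<Rightarrow> real" where
  "JR f1 f2 \<gamma> \<eta> m \<theta> =
     EXX f1 f2 (\<lambda>x1 x2. qloss \<theta> x1 x2 (\<eta> (\<gamma> m x1 x2, xsel (\<gamma> m x1 x2) x1 x2) m))"

text \<open>P(M = m) with M = psi(Theta), Theta having density p on [0,1].\<close>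
definition probM :: "(real \<Rightarrow> real) \<Rightarrow> (real \<Rightarrow> nat) \<Rightarrow> nat \<Rightarrow> real" where
  "probM p \<psi> m = (LINT \<theta>:{\<theta>\<in>{0..1}. \<psi> \<theta> = m}|lborel. p \<theta>)"

text \<open>Platform's expected loss J_P(s | m, x1, x2, psi, eta) = E[l | X = x, M = m]
  (elementary conditional expectation E[l 1(M=m)] / P(M=m); Theta independent of X).\<close>
definition JP :: "(real \<Rightarrow> real) \<Rightarrow> (real \<Rightarrow> nat) \<Rightarrow> (nat \<times> real \<Rightarrow> nat \<Rightarrow> real \<times> real)
    \<Rightarrow> nat \<Rightarrow> nat \<Rightarrow> real \<Rightarrow> real \<Rightarrow> real" where
  "JP p \<psi> \<eta> s m x1 x2 =
     (LINT \<theta>:{\<theta>\<in>{0..1}. \<psi> \<theta> = m}|lborel. qloss \<theta> x1 x2 (\<eta> (s, xsel s x1 x2) m) * p \<theta>)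
     / probM p \<psi> m"

text \<open>Joint density of (M = m, Y = (s, x)) weighted by h(X1, X2):
  E[h(X1,X2); M = m, S = s, X_s \<in> dx] / dx.\<close>
definition condpart :: "(real \<Rightarrow> real) \<Rightarrow> (real \<Rightarrow> real) \<Rightarrow> (real \<Rightarrow> real) \<Rightarrow> (real \<Rightarrow> nat)
    \<Rightarrow> (nat \<Rightarrow> real \<Rightarrow> real \<Rightarrow> nat) \<Rightarrow> nat \<Rightarrow> nat \<Rightarrow> real \<Rightarrow> (real \<Rightarrow> real \<Rightarrow> real) \<Rightarrow> real" where
  "condpart f1 f2 p \<psi> \<gamma> m s x h =
     probM p \<psi> m *
     (if s = 1 then f1 x * (LINT x2|lborel. h x x2 * indicator {x2. \<gamma> m x x2 = 1} x2 * f2 x2)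
      else f2 x * (LINT x1|lborel. h x1 x * indicator {x1. \<gamma> m x1 x = 2} x1 * f1 x1))"

text \<open>Bayesian Nash Equilibrium (with messages in {1..n}); strategies are required
  to be measurable so that M and Y are random variables.  Condition (3) is imposed
  wherever the conditioning event has positive (joint) density.\<close>
definition BNE :: "nat \<Rightarrow> (real \<Rightarrow> real) \<Rightarrow> (real \<Rightarrow> real) \<Rightarrow> (real \<Rightarrow> real)
    \<Rightarrow> (real \<Rightarrow> nat) \<Rightarrow> (nat \<Rightarrow> real \<Rightarrow> real \<Rightarrow> nat) \<Rightarrow> (nat \<times> real \<Rightarrow> nat \<Rightarrow> real \<times> real) \<Rightarrow> bool" where
  "BNE n f1 f2 p \<psi> \<gamma> \<eta> \<longleftrightarrow>
     \<psi> \<in> lborel \<rightarrow>\<^sub>M count_space UNIV \<and> (\<forall>\<theta>\<in>{0..1}. \<psi> \<theta> \<in> {1..n}) \<and>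
     (\<forall>m. (\<lambda>z. \<gamma> m (fst z) (snd z)) \<in> (lborel \<Otimes>\<^sub>M lborel) \<rightarrow>\<^sub>M count_space UNIV) \<and>
     (\<forall>m x1 x2. \<gamma> m x1 x2 \<in> {1, 2}) \<and>
     (\<forall>s m. (\<lambda>x. \<eta> (s, x) m) \<in> borel_measurable lborel) \<and>
     (\<forall>\<theta>\<in>{0..1}. \<forall>m\<in>{1..n}. JR f1 f2 \<gamma> \<eta> (\<psi> \<theta>) \<theta> \<le> JR f1 f2 \<gamma> \<eta> m \<theta>) \<and>
     (\<forall>m\<in>{1..n}. \<forall>x1 x2. \<forall>s\<in>{1, 2}. JP p \<psi> \<eta> (\<gamma> m x1 x2) m x1 x2 \<le> JP p \<psi> \<eta> s m x1 x2) \<and>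
     (\<forall>m\<in>{1..n}. \<forall>s\<in>{1, 2}. \<forall>x.
        condpart f1 f2 p \<psi> \<gamma> m s x (\<lambda>_ _. 1) > 0 \<longrightarrow>
        \<eta> (s, x) m = (condpart f1 f2 p \<psi> \<gamma> m s x (\<lambda>a b. a) / condpart f1 f2 p \<psi> \<gamma> m s x (\<lambda>_ _. 1),
                       condpart f1 f2 p \<psi> \<gamma> m s x (\<lambda>a b. b) / condpart f1 f2 p \<psi> \<gamma> m s x (\<lambda>_ _. 1)))"

definition wqd :: "real \<Rightarrow> real \<Rightarrow> (nat \<Rightarrow> real) \<Rightarrow> nat \<Rightarrow> real \<Rightarrow> real \<Rightarrow> nat" where
  "wqd \<mu>1 \<mu>2 w m x1 x2 = (if w m * (x1 - \<mu>1)^2 > (1 - w m) * (x2 - \<mu>2)^2 then 1 else 2)"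

definition Lw :: "(real \<Rightarrow> real) \<Rightarrow> (real \<Rightarrow> real) \<Rightarrow> real \<Rightarrow> real \<Rightarrow> real \<Rightarrow> real \<Rightarrow> real" where
  "Lw f1 f2 \<mu>1 \<mu>2 w \<theta> =
     \<theta> * EXX f1 f2 (\<lambda>x1 x2. (x1 - \<mu>1)^2 *
                         (if (1 - w) * (x2 - \<mu>2)^2 \<ge> w * (x1 - \<mu>1)^2 then 1 else 0))
   + (1 - \<theta>) * EXX f1 f2 (\<lambda>x1 x2. (x2 - \<mu>2)^2 *
                         (if (1 - w) * (x2 - \<mu>2)^2 < w * (x1 - \<mu>1)^2 then 1 else 0))"

definition Lbar :: "nat \<Rightarrow> (real \<Rightarrow> real) \<Rightarrow> (real \<Rightarrow> real) \<Rightarrow> real \<Rightarrow> real \<Rightarrow> (real \<Rightarrow> real)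
    \<Rightarrow> (nat \<Rightarrow> real) \<Rightarrow> real" where
  "Lbar n f1 f2 \<mu>1 \<mu>2 p w =
     (LINT \<theta>:{0..1}|lborel. Min ((\<lambda>i. Lw f1 f2 \<mu>1 \<mu>2 (w i) \<theta>) ` {1..n}) * p \<theta>)"

end

theory Submission
  imports Defs "HOL-Probability.Probability_Measure"
begin

text \<open>
  Let the receiver estimate the undisclosed coordinate by its prior mean.  Under a WQD rule, the
  values of the undisclosed coordinate that lead to a given disclosure form a set symmetric about
  its mean, so by symmetry of the densities this estimator is the Bayes estimator, and the
  receiver's loss for weight \<open>w\<close> is \<open>L(w | \<theta>)\<close>; the receiver therefore sends a message whose
  weight minimises it.  Given message \<open>m\<close> and the realisation \<open>x\<close>, the platform compares
  \<open>\<theta>\<^sub>m (x\<^sub>1 - \<mu>\<^sub>1)\<^sup>2\<close> with \<open>(1 - \<theta>\<^sub>m) (x\<^sub>2 - \<mu>\<^sub>2)\<^sup>2\<close>, where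
  \<open>\<theta>\<^sub>m = E[\<Theta> | M = m]\<close>; this is the WQD rule with weight \<open>w\<^sub>m\<close> as soon as
  \<open>w\<^sub>m = \<theta>\<^sub>m\<close>.  The latter is forced by optimality of the weights: since \<open>L(w | \<theta>)\<close> is
  affine in \<open>\<theta>\<close>, replacing \<open>w\<^sub>m\<close> by \<open>\<theta>\<^sub>m\<close> changes the ex ante loss by at most
  \<open>P(M = m) (L(\<theta>\<^sub>m | \<theta>\<^sub>m) - L(w\<^sub>m | \<theta>\<^sub>m))\<close>, and \<open>w = \<theta>\<close> is the unique minimiser of
  \<open>L(w | \<theta>)\<close> because positive densities charge the open set where the two rules disagree.
\<close>

section \<open>Densities on the real line\<close>

lemma prob_space_density_lborel:
  fixes f :: "real \<Rightarrow> real"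
  assumes "f \<in> borel_measurable lborel" "\<And>x. 0 \<le> f x"
    and "integrable lborel f" "integral\<^sup>L lborel f = 1"
  shows "prob_space (density lborel (\<lambda>x. ennreal (f x)))"
proof (rule prob_spaceI)
  have "(\<integral>\<^sup>+ x. ennreal (f x) \<partial>lborel) = 1"
    using assms by (subst nn_integral_eq_integral) auto
  then show "emeasure (density lborel (\<lambda>x. ennreal (f x))) (space (density lborel (\<lambda>x. ennreal (f x)))) = 1"
    using assms(1) by (simp add: emeasure_density)
qed

lemma integrable_density_lborel_centered_square:
  fixes f :: "real \<Rightarrow> real"
  assumes "f \<in> borel_measurable lborel" "\<And>x. 0 \<le> f x"
    and "integrable lborel f" "integrable lborel (\<lambda>x. x * f x)" "integrable lborel (\<lambda>x. x^2 * f x)"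
  shows "integrable (density lborel (\<lambda>x. ennreal (f x))) (\<lambda>x. (x - c)^2)"
proof -
  have "(\<lambda>x. f x * (x - c)^2) = (\<lambda>x. x^2 * f x - 2 * c * (x * f x) + c^2 * f x)"
    by (auto simp: power2_eq_square algebra_simps)
  then have "integrable lborel (\<lambda>x. f x * (x - c)^2)"
    using assms(3-5) by auto
  then show ?thesis
    using assms(1,2) by (subst integrable_density) auto
qed

lemma emeasure_density_lborel_open_pos:
  fixes f :: "real \<Rightarrow> real"
  assumes "f \<in> borel_measurable lborel" "\<And>x. 0 < f x" and "open A" "x \<in> A"
  shows "emeasure (density lborel (\<lambda>x. ennreal (f x))) A > 0"
proof (rule ccontr)
  have A: "A \<in> sets lborel" using assms(3) by auto
  assume "\<not> ?thesis"
  then have "(\<integral>\<^sup>+ x. ennreal (f x) * indicator A x \<partial>lborel) = 0"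
    using assms(1) A by (simp add: emeasure_density)
  then have "AE x in lborel. ennreal (f x) * indicator A x = 0"
    using assms(1) A by (subst (asm) nn_integral_0_iff_AE) auto
  moreover have "ennreal (f y) \<noteq> 0" for y
    using assms(2)[of y] by simp
  ultimately have "AE x in lebesgue. x \<in> A \<longrightarrow> x \<in> {}"
    by (intro AE_completion, eventually_elim) (auto simp: indicator_def)
  then show False
    using mem_closed_if_AE_lebesgue_open[OF assms(3) closed_empty] assms(4) by auto
qed

lemma lborel_integral_centered_symmetric:
  fixes g :: "real \<Rightarrow> real"
  assumes "\<And>u. g (\<mu> + u) = g (\<mu> - u)"
  shows "(LINT x|lborel. (x - \<mu>) * g x) = 0"
proof -
  have reflect: "(2 * \<mu> + (-1) * x - \<mu>) * g (2 * \<mu> + (-1) * x) = - ((x - \<mu>) * g x)" for x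
    using assms[of "\<mu> - x"] by (simp add: algebra_simps)
  have "(LINT x|lborel. (x - \<mu>) * g x) = (LINT x|lborel. (2 * \<mu> + (-1) * x - \<mu>) * g (2 * \<mu> + (-1) * x))"
    using lborel_integral_real_affine[of "-1" "\<lambda>x. (x - \<mu>) * g x" "2 * \<mu>"] by simp
  also have "\<dots> = - (LINT x|lborel. (x - \<mu>) * g x)"
    by (simp only: reflect Bochner_Integration.integral_minus)
  finally show ?thesis by simp
qed

lemma integrable_pair_measure_fst:
  fixes g :: "'a \<Rightarrow> real"
  assumes "prob_space N" "integrable M g"
  shows "integrable (M \<Otimes>\<^sub>M N) (\<lambda>z. g (fst z))"
proof -
  have "integrable (distr (M \<Otimes>\<^sub>M N) M fst) g"
    using assms by (simp add: prob_space.distr_pair_fst)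
  then show ?thesis
    using assms(2) by (subst (asm) integrable_distr_eq) auto
qed

lemma integrable_pair_measure_snd:
  fixes g :: "'b \<Rightarrow> real"
  assumes "prob_space M" "prob_space N" "integrable N g"
  shows "integrable (M \<Otimes>\<^sub>M N) (\<lambda>z. g (snd z))"
proof -
  interpret pair_sigma_finite N M
    using assms by (simp add: pair_sigma_finite_def prob_space_imp_sigma_finite)
  have "integrable (N \<Otimes>\<^sub>M M) (\<lambda>z. g (fst z))"
    using assms by (intro integrable_pair_measure_fst)
  from integrable_product_swap[OF this] show ?thesis
    by (simp add: case_prod_unfold)
qed

lemma lborel_integral_symmetric_set_mean:
  fixes f :: "real \<Rightarrow> real"
  assumes "f \<in> borel_measurable lborel" "integrable lborel f" "integrable lborel (\<lambda>x. x * f x)"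
    and "\<And>u. f (\<mu> + u) = f (\<mu> - u)"
    and "S \<in> sets borel" "\<And>u. \<mu> + u \<in> S \<longleftrightarrow> \<mu> - u \<in> S"
  shows "(LINT y|lborel. y * indicator S y * f y) = \<mu> * (LINT y|lborel. indicator S y * f y)"
proof -
  let ?g = "\<lambda>y. indicator S y * f y :: real"
  have "integrable lborel ?g"
  proof (rule Bochner_Integration.integrable_bound[OF assms(2)])
    show "?g \<in> borel_measurable lborel"
      using assms(1,5) by measurable
  qed (auto simp: indicator_def)
  moreover have "integrable lborel (\<lambda>y. (y - \<mu>) * ?g y)"
  proof (rule Bochner_Integration.integrable_bound)
    show "integrable lborel (\<lambda>y. y * f y - \<mu> * f y)"
      using assms(2,3) by auto
  qed (use assms(1,5) in \<open>auto simp: indicator_def abs_mult left_diff_distrib[symmetric]\<close>)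
  moreover have "(LINT y|lborel. (y - \<mu>) * ?g y) = 0"
    using assms(4,6) by (intro lborel_integral_centered_symmetric) (simp add: indicator_def)
  moreover have "y * indicator S y * f y = (y - \<mu>) * ?g y + \<mu> * ?g y" for y
    by (simp add: algebra_simps)
  ultimately show ?thesis
    by simp
qed

section \<open>The receiver's loss under a WQD rule\<close>

definition wqd_loss :: "real \<Rightarrow> real \<Rightarrow> real \<Rightarrow> real \<Rightarrow> real \<Rightarrow> real \<Rightarrow> real" where
  "wqd_loss \<mu>1 \<mu>2 w \<theta> x1 x2 =
     (if (1 - w) * (x2 - \<mu>2)^2 \<ge> w * (x1 - \<mu>1)^2 then \<theta> * (x1 - \<mu>1)^2 else (1 - \<theta>) * (x2 - \<mu>2)^2)"

definition mean_estimator :: "real \<Rightarrow> real \<Rightarrow> nat \<times> real \<Rightarrow> nat \<Rightarrow> real \<times> real" where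
  "mean_estimator \<mu>1 \<mu>2 y m = (if fst y = 1 then (snd y, \<mu>2) else (\<mu>1, snd y))"

lemma qloss_wqd_mean_estimator:
  "qloss \<theta> x1 x2 (mean_estimator \<mu>1 \<mu>2 (wqd \<mu>1 \<mu>2 v m x1 x2, xsel (wqd \<mu>1 \<mu>2 v m x1 x2) x1 x2) m)
     = wqd_loss \<mu>1 \<mu>2 (v m) \<theta> x1 x2"
  by (simp add: qloss_def mean_estimator_def wqd_def xsel_def wqd_loss_def not_less)

lemma wqd_loss_affine:
  "wqd_loss \<mu>1 \<mu>2 w \<theta> x1 x2 = \<theta> * wqd_loss \<mu>1 \<mu>2 w 1 x1 x2 + (1 - \<theta>) * wqd_loss \<mu>1 \<mu>2 w 0 x1 x2"
  by (simp add: wqd_loss_def)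

lemma wqd_loss_own_weight_le: "wqd_loss \<mu>1 \<mu>2 \<theta> \<theta> x1 x2 \<le> wqd_loss \<mu>1 \<mu>2 w \<theta> x1 x2"
  by (auto simp: wqd_loss_def algebra_simps)

lemma wqd_loss_own_weight_less:
  assumes "((1 - w) * (x2 - \<mu>2)^2 - w * (x1 - \<mu>1)^2) * ((1 - \<theta>) * (x2 - \<mu>2)^2 - \<theta> * (x1 - \<mu>1)^2) < 0"
  shows "wqd_loss \<mu>1 \<mu>2 \<theta> \<theta> x1 x2 < wqd_loss \<mu>1 \<mu>2 w \<theta> x1 x2"
  using assms unfolding wqd_loss_def mult_less_0_iff by (auto simp: left_diff_distrib)

lemma Lw_affine: "Lw f1 f2 \<mu>1 \<mu>2 w \<theta> = \<theta> * Lw f1 f2 \<mu>1 \<mu>2 w 1 + (1 - \<theta>) * Lw f1 f2 \<mu>1 \<mu>2 w 0"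
  by (simp add: Lw_def)

locale symmetric_densities =
  fixes f1 f2 :: "real \<Rightarrow> real" and \<mu>1 \<mu>2 :: real
  assumes f1_meas[measurable]: "f1 \<in> borel_measurable lborel" and f1_pos: "\<And>x. 0 < f1 x"
    and f1_int: "integrable lborel f1" and f1_one: "integral\<^sup>L lborel f1 = 1"
    and f1_mean_int: "integrable lborel (\<lambda>x. x * f1 x)"
    and f1_var: "integrable lborel (\<lambda>x. x^2 * f1 x)"
    and f1_sym: "\<And>t. f1 (\<mu>1 + t) = f1 (\<mu>1 - t)"
    and f2_meas[measurable]: "f2 \<in> borel_measurable lborel" and f2_pos: "\<And>x. 0 < f2 x"
    and f2_int: "integrable lborel f2" and f2_one: "integral\<^sup>L lborel f2 = 1"
    and f2_mean_int: "integrable lborel (\<lambda>x. x * f2 x)"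
    and f2_var: "integrable lborel (\<lambda>x. x^2 * f2 x)"
    and f2_sym: "\<And>t. f2 (\<mu>2 + t) = f2 (\<mu>2 - t)"
begin

abbreviation "D1 \<equiv> density lborel (\<lambda>x. ennreal (f1 x))"
abbreviation "D2 \<equiv> density lborel (\<lambda>x. ennreal (f2 x))"

sublocale pair_prob_space D1 D2
  using prob_space_density_lborel[OF f1_meas _ f1_int f1_one]
    prob_space_density_lborel[OF f2_meas _ f2_int f2_one] f1_pos f2_pos
  by (simp add: pair_prob_space_def pair_sigma_finite_def prob_space_imp_sigma_finite less_imp_le)

lemma integrable_wqd_loss: "integrable (D1 \<Otimes>\<^sub>M D2) (\<lambda>z. wqd_loss \<mu>1 \<mu>2 w \<theta> (fst z) (snd z))"
proof (rule Bochner_Integration.integrable_bound)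
  have "integrable (D1 \<Otimes>\<^sub>M D2) (\<lambda>z. (fst z - \<mu>1)^2)"
    using f1_pos by (intro integrable_pair_measure_fst M2.prob_space_axioms
        integrable_density_lborel_centered_square f1_int f1_mean_int f1_var) (auto simp: less_imp_le)
  moreover have "integrable (D1 \<Otimes>\<^sub>M D2) (\<lambda>z. (snd z - \<mu>2)^2)"
    using f2_pos by (intro integrable_pair_measure_snd M1.prob_space_axioms M2.prob_space_axioms
        integrable_density_lborel_centered_square f2_int f2_mean_int f2_var) (auto simp: less_imp_le)
  ultimately show "integrable (D1 \<Otimes>\<^sub>M D2) (\<lambda>z. \<bar>\<theta>\<bar> * (fst z - \<mu>1)^2 + \<bar>1 - \<theta>\<bar> * (snd z - \<mu>2)^2)"
    by auto
  show "(\<lambda>z. wqd_loss \<mu>1 \<mu>2 w \<theta> (fst z) (snd z)) \<in> borel_measurable (D1 \<Otimes>\<^sub>M D2)"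
    unfolding wqd_loss_def by measurable
qed (auto simp: wqd_loss_def abs_mult)

lemma Lw_eq_expected_wqd_loss: "Lw f1 f2 \<mu>1 \<mu>2 w \<theta> = EXX f1 f2 (wqd_loss \<mu>1 \<mu>2 w \<theta>)"
proof -
  have "Lw f1 f2 \<mu>1 \<mu>2 w t = EXX f1 f2 (wqd_loss \<mu>1 \<mu>2 w t)" if "t \<in> {0, 1}" for t
    using that unfolding Lw_def EXX_def wqd_loss_def
    by (auto intro!: Bochner_Integration.integral_cong)
  then have "Lw f1 f2 \<mu>1 \<mu>2 w \<theta> = \<theta> * EXX f1 f2 (wqd_loss \<mu>1 \<mu>2 w 1) + (1 - \<theta>) * EXX f1 f2 (wqd_loss \<mu>1 \<mu>2 w 0)"
    by (subst Lw_affine) simp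
  also have "\<dots> = EXX f1 f2 (wqd_loss \<mu>1 \<mu>2 w \<theta>)"
    using integrable_wqd_loss by (simp add: EXX_def wqd_loss_affine[of \<mu>1 \<mu>2 w \<theta>])
  finally show ?thesis .
qed

lemma JR_wqd_mean_estimator:
  "JR f1 f2 (wqd \<mu>1 \<mu>2 v) (mean_estimator \<mu>1 \<mu>2) m \<theta> = Lw f1 f2 \<mu>1 \<mu>2 (v m) \<theta>"
  by (simp add: JR_def qloss_wqd_mean_estimator Lw_eq_expected_wqd_loss)

lemma wqd_loss_own_weight_not_AE_eq:
  assumes t: "t \<in> {0..1}" and w: "w \<in> {0..1}" and "w \<noteq> t"
  shows "\<not> (AE z in D1 \<Otimes>\<^sub>M D2. wqd_loss \<mu>1 \<mu>2 w t (fst z) (snd z) = wqd_loss \<mu>1 \<mu>2 t t (fst z) (snd z))"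
proof
  let ?M = "D1 \<Otimes>\<^sub>M D2"
  assume ae: "AE z in ?M. wqd_loss \<mu>1 \<mu>2 w t (fst z) (snd z) = wqd_loss \<mu>1 \<mu>2 t t (fst z) (snd z)"
  define U where "U = {z. ((1 - w) * (snd z - \<mu>2)^2 - w * (fst z - \<mu>1)^2) *
                          ((1 - t) * (snd z - \<mu>2)^2 - t * (fst z - \<mu>1)^2) < 0}"
  \<comment> \<open>The rules disagree where (x1 - \<mu>1)^2 = 1 - s and (x2 - \<mu>2)^2 = s, with s strictly between w and t.\<close>
  define s where "s = (w + t) / 2"
  have "(\<mu>1 + sqrt (1 - s), \<mu>2 + sqrt s) \<in> U"
  proof -
    have "((1 - w) * s - w * (1 - s)) * ((1 - t) * s - t * (1 - s)) = (s - w) * (s - t)"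
      by (simp add: algebra_simps)
    also have "\<dots> < 0"
      using \<open>w \<noteq> t\<close> by (auto simp: s_def mult_less_0_iff)
    finally show ?thesis
      using t w by (simp add: U_def s_def)
  qed
  moreover have "open U"
    unfolding U_def by (intro open_Collect_less continuous_intros)
  ultimately obtain A B where AB: "open A" "open B" "A \<noteq> {}" "B \<noteq> {}" "A \<times> B \<subseteq> U"
    by (metis open_prod_elim empty_iff mem_Times_iff)
  have "emeasure ?M (A \<times> B) = emeasure D1 A * emeasure D2 B"
    using AB by (intro M2.emeasure_pair_measure_Times) auto
  also have "\<dots> > 0"
    using AB f1_pos f2_pos by (auto simp: ennreal_zero_less_mult_iff
        intro!: emeasure_density_lborel_open_pos)
  finally have "\<not> (AE z in ?M. z \<notin> A \<times> B)"
    using AB by (subst AE_iff_measurable[OF _ refl]) (auto simp: space_pair_measure)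
  moreover from ae have "AE z in ?M. z \<notin> A \<times> B"
    by eventually_elim (use AB wqd_loss_own_weight_less in \<open>fastforce simp: U_def\<close>)
  ultimately show False
    by blast
qed

lemma Lw_own_weight_less:
  assumes "t \<in> {0..1}" "w \<in> {0..1}" "w \<noteq> t"
  shows "Lw f1 f2 \<mu>1 \<mu>2 t t < Lw f1 f2 \<mu>1 \<mu>2 w t"
proof -
  let ?M = "D1 \<Otimes>\<^sub>M D2"
  define d where "d z = wqd_loss \<mu>1 \<mu>2 w t (fst z) (snd z) - wqd_loss \<mu>1 \<mu>2 t t (fst z) (snd z)" for z
  have d_int: "integrable ?M d"
    unfolding d_def using integrable_wqd_loss by auto
  have d_nonneg: "d z \<ge> 0" for z
    unfolding d_def using wqd_loss_own_weight_le by simp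
  have "\<not> (AE z in ?M. d z = 0)"
    using wqd_loss_own_weight_not_AE_eq[OF assms] by (simp add: d_def)
  then have "integral\<^sup>L ?M d \<noteq> 0"
    using d_int d_nonneg by (subst integral_nonneg_eq_0_iff_AE) auto
  moreover have "integral\<^sup>L ?M d \<ge> 0"
    using d_nonneg by (simp add: integral_nonneg_AE)
  moreover have "integral\<^sup>L ?M d = Lw f1 f2 \<mu>1 \<mu>2 w t - Lw f1 f2 \<mu>1 \<mu>2 t t"
    unfolding d_def using integrable_wqd_loss by (simp add: Lw_eq_expected_wqd_loss EXX_def)
  ultimately show ?thesis
    by linarith
qed

lemma condpart_wqd_mean_estimator:
  assumes pos: "condpart f1 f2 p \<psi> (wqd \<mu>1 \<mu>2 v) m s x (\<lambda>_ _. 1) > 0"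
  shows "mean_estimator \<mu>1 \<mu>2 (s, x) m =
     (condpart f1 f2 p \<psi> (wqd \<mu>1 \<mu>2 v) m s x (\<lambda>a b. a) / condpart f1 f2 p \<psi> (wqd \<mu>1 \<mu>2 v) m s x (\<lambda>_ _. 1),
      condpart f1 f2 p \<psi> (wqd \<mu>1 \<mu>2 v) m s x (\<lambda>a b. b) / condpart f1 f2 p \<psi> (wqd \<mu>1 \<mu>2 v) m s x (\<lambda>_ _. 1))"
proof (cases "s = 1")
  case True
  define S where "S = {x2. wqd \<mu>1 \<mu>2 v m x x2 = 1}"
  define I where "I = (LINT y|lborel. indicator S y * f2 y)"
  have "S \<in> sets borel"
    unfolding S_def wqd_def by measurable
  then have "(LINT y|lborel. y * indicator S y * f2 y) = \<mu>2 * I"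
    unfolding I_def using f2_meas f2_int f2_mean_int f2_sym
    by (intro lborel_integral_symmetric_set_mean) (auto simp: S_def wqd_def)
  moreover have "(LINT y|lborel. x * indicator S y * f2 y) = x * I"
    unfolding I_def by (simp add: mult.assoc)
  moreover have "condpart f1 f2 p \<psi> (wqd \<mu>1 \<mu>2 v) m s x h =
      probM p \<psi> m * (f1 x * (LINT y|lborel. h x y * indicator S y * f2 y))" for h
    using True by (simp add: condpart_def S_def)
  ultimately show ?thesis
    using pos True by (auto simp: mean_estimator_def I_def)
next
  case False
  define S where "S = {x1. wqd \<mu>1 \<mu>2 v m x1 x = 2}"
  define I where "I = (LINT y|lborel. indicator S y * f1 y)"
  have "S \<in> sets borel"
    unfolding S_def wqd_def by measurable
  then have "(LINT y|lborel. y * indicator S y * f1 y) = \<mu>1 * I"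
    unfolding I_def using f1_meas f1_int f1_mean_int f1_sym
    by (intro lborel_integral_symmetric_set_mean) (auto simp: S_def wqd_def)
  moreover have "(LINT y|lborel. x * indicator S y * f1 y) = x * I"
    unfolding I_def by (simp add: mult.assoc)
  moreover have "condpart f1 f2 p \<psi> (wqd \<mu>1 \<mu>2 v) m s x h =
      probM p \<psi> m * (f2 x * (LINT y|lborel. h y x * indicator S y * f1 y))" for h
    using False by (simp add: condpart_def S_def)
  ultimately show ?thesis
    using pos False by (auto simp: mean_estimator_def I_def)
qed

end

section \<open>Optimal weights are posterior means\<close>

lemma abs_Lw_le: "\<theta> \<in> {0..1} \<Longrightarrow> \<bar>Lw f1 f2 \<mu>1 \<mu>2 w \<theta>\<bar> \<le> \<bar>Lw f1 f2 \<mu>1 \<mu>2 w 1\<bar> + \<bar>Lw f1 f2 \<mu>1 \<mu>2 w 0\<bar>"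
  by (subst Lw_affine) (auto simp: abs_mult intro!: abs_triangle_ineq[THEN order_trans]
      add_mono mult_left_le_one_le)

locale optimal_wqd = symmetric_densities +
  fixes p :: "real \<Rightarrow> real" and n :: nat and v :: "nat \<Rightarrow> real"
  assumes n_pos: "n \<ge> 1"
    and p_meas[measurable]: "p \<in> borel_measurable lborel"
    and p_nonneg: "\<And>\<theta>. \<theta> \<in> {0..1} \<Longrightarrow> 0 \<le> p \<theta>"
    and p_int: "set_integrable lborel {0..1} p"
    and v_range: "\<And>i. i \<in> {1..n} \<Longrightarrow> v i \<in> {0..1}"
    and v_opt: "\<And>w'. \<forall>i\<in>{1..n}. w' i \<in> {0..1} \<Longrightarrow> Lbar n f1 f2 \<mu>1 \<mu>2 p v \<le> Lbar n f1 f2 \<mu>1 \<mu>2 p w'"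
begin

abbreviation L :: "real \<Rightarrow> real \<Rightarrow> real" where
  "L \<equiv> Lw f1 f2 \<mu>1 \<mu>2"

definition best_message :: "real \<Rightarrow> nat" where
  "best_message \<theta> = (LEAST i. i \<in> {1..n} \<and> (\<forall>j\<in>{1..n}. L (v i) \<theta> \<le> L (v j) \<theta>))"

lemma best_message: "best_message \<theta> \<in> {1..n}" "j \<in> {1..n} \<Longrightarrow> L (v (best_message \<theta>)) \<theta> \<le> L (v j) \<theta>"
proof -
  let ?F = "(\<lambda>i. L (v i) \<theta>) ` {1..n}"
  have "Min ?F \<in> ?F"
    using n_pos by (intro Min_in) auto
  then obtain i where "i \<in> {1..n}" "L (v i) \<theta> = Min ?F"
    by auto
  then have "\<exists>i. i \<in> {1..n} \<and> (\<forall>j\<in>{1..n}. L (v i) \<theta> \<le> L (v j) \<theta>)"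
    by force
  from LeastI_ex[OF this] show "best_message \<theta> \<in> {1..n}" "j \<in> {1..n} \<Longrightarrow> L (v (best_message \<theta>)) \<theta> \<le> L (v j) \<theta>"
    unfolding best_message_def by auto
qed

lemma measurable_best_message[measurable]: "best_message \<in> lborel \<rightarrow>\<^sub>M count_space UNIV"
  unfolding best_message_def Lw_def by measurable

lemma Min_eq_best_message: "Min ((\<lambda>i. L (v i) \<theta>) ` {1..n}) = L (v (best_message \<theta>)) \<theta>"
  using best_message by (intro Min_eqI) auto

abbreviation message_set :: "nat \<Rightarrow> real set" where
  "message_set m \<equiv> {\<theta> \<in> {0..1}. best_message \<theta> = m}"

definition message_moment :: "nat \<Rightarrow> real" where
  "message_moment m = (LINT \<theta>:message_set m|lborel. \<theta> * p \<theta>)"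

lemma set_integrable_bounded_prior:
  assumes "S \<in> sets lborel" "S \<subseteq> {0..1}" "g \<in> borel_measurable lborel" "\<And>\<theta>. \<theta> \<in> S \<Longrightarrow> \<bar>g \<theta>\<bar> \<le> K"
  shows "set_integrable lborel S (\<lambda>\<theta>. g \<theta> * p \<theta>)"
proof (rule set_integrable_bound)
  show "set_integrable lborel S (\<lambda>\<theta>. K * p \<theta>)"
    using set_integrable_subset[OF p_int assms(1,2)] by simp
  show "set_borel_measurable lborel S (\<lambda>\<theta>. g \<theta> * p \<theta>)"
    using assms(1,3) unfolding set_borel_measurable_def by measurable
  show "AE \<theta> in lborel. \<theta> \<in> S \<longrightarrow> norm (g \<theta> * p \<theta>) \<le> norm (K * p \<theta>)"
  proof (intro AE_I2 impI)
    fix \<theta> assume "\<theta> \<in> S"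
    then have "\<bar>g \<theta>\<bar> \<le> \<bar>K\<bar>" "0 \<le> p \<theta>"
      using assms(2,4) p_nonneg abs_ge_self order_trans by blast+
    then have "\<bar>g \<theta>\<bar> * p \<theta> \<le> \<bar>K\<bar> * p \<theta>" "0 \<le> p \<theta>"
      by (auto intro: mult_right_mono)
    then show "norm (g \<theta> * p \<theta>) \<le> norm (K * p \<theta>)"
      by (simp add: abs_mult)
  qed
qed

lemma set_integrable_message_loss:
  assumes "g \<in> borel_measurable lborel" "\<And>\<theta>. \<theta> \<in> {0..1} \<Longrightarrow> g \<theta> \<in> (\<lambda>i. L (u i) \<theta>) ` {1..n}"
  shows "set_integrable lborel {0..1} (\<lambda>\<theta>. g \<theta> * p \<theta>)"
proof (rule set_integrable_bounded_prior)
  show "\<bar>g \<theta>\<bar> \<le> (\<Sum>i\<in>{1..n}. \<bar>L (u i) 1\<bar> + \<bar>L (u i) 0\<bar>)" if \<theta>: "\<theta> \<in> {0..1}" for \<theta>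
  proof -
    obtain i where i: "i \<in> {1..n}" "g \<theta> = L (u i) \<theta>"
      using assms(2)[OF \<theta>] by auto
    have "\<bar>L (u i) 1\<bar> + \<bar>L (u i) 0\<bar> \<le> (\<Sum>i\<in>{1..n}. \<bar>L (u i) 1\<bar> + \<bar>L (u i) 0\<bar>)"
      using i by (intro member_le_sum) auto
    then show ?thesis
      using abs_Lw_le[OF \<theta>, of f1 f2 \<mu>1 \<mu>2 "u i"] i by linarith
  qed
qed (use assms(1) in auto)

lemma Lbar_le_best_message_loss:
  "Lbar n f1 f2 \<mu>1 \<mu>2 p u \<le> (LINT \<theta>:{0..1}|lborel. L (u (best_message \<theta>)) \<theta> * p \<theta>)"
  unfolding Lbar_def
proof (rule set_integral_mono)
  have "Min ((\<lambda>i. L (u i) \<theta>) ` {1..n}) \<in> (\<lambda>i. L (u i) \<theta>) ` {1..n}" for \<theta>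
    using n_pos by (intro Min_in) auto
  then show "set_integrable lborel {0..1} (\<lambda>\<theta>. Min ((\<lambda>i. L (u i) \<theta>) ` {1..n}) * p \<theta>)"
    by (intro set_integrable_message_loss) (auto simp: Lw_def)
  show "set_integrable lborel {0..1} (\<lambda>\<theta>. L (u (best_message \<theta>)) \<theta> * p \<theta>)"
    using best_message(1) by (intro set_integrable_message_loss) (auto simp: Lw_def)
  show "Min ((\<lambda>i. L (u i) \<theta>) ` {1..n}) * p \<theta> \<le> L (u (best_message \<theta>)) \<theta> * p \<theta>"
    if "\<theta> \<in> {0..1}" for \<theta>
    using that best_message(1) p_nonneg by (intro mult_right_mono Min_le) auto
qed

lemma Lbar_eq_best_message_loss:
  "Lbar n f1 f2 \<mu>1 \<mu>2 p v = (LINT \<theta>:{0..1}|lborel. L (v (best_message \<theta>)) \<theta> * p \<theta>)"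
  by (simp only: Lbar_def Min_eq_best_message)

lemma set_integrable_message_set:
  "set_integrable lborel (message_set m) p" "set_integrable lborel (message_set m) (\<lambda>\<theta>. \<theta> * p \<theta>)"
proof -
  have "message_set m \<in> sets lborel" "message_set m \<subseteq> {0..1}"
    by auto
  from set_integrable_bounded_prior[OF this, of "\<lambda>_. 1" 1] set_integrable_bounded_prior[OF this, of "\<lambda>\<theta>. \<theta>" 1]
  show "set_integrable lborel (message_set m) p" "set_integrable lborel (message_set m) (\<lambda>\<theta>. \<theta> * p \<theta>)"
    by auto
qed

lemma message_moment_bounds: "0 \<le> message_moment m" "message_moment m \<le> probM p best_message m"
proof -
  have "(LINT \<theta>:message_set m|lborel. 0) \<le> message_moment m"
    unfolding message_moment_def using set_integrable_message_set p_nonneg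
    by (intro set_integral_mono) (auto simp: set_integrable_def)
  then show "0 \<le> message_moment m"
    by simp
  show "message_moment m \<le> probM p best_message m"
    unfolding message_moment_def probM_def using set_integrable_message_set p_nonneg
    by (intro set_integral_mono) (auto intro: mult_left_le_one_le)
qed

lemma set_integral_affine_message_set:
  "(LINT \<theta>:message_set m|lborel. (\<theta> * a + (1 - \<theta>) * b) * p \<theta>)
     = a * message_moment m + b * (probM p best_message m - message_moment m)"
proof -
  have "(LINT \<theta>:message_set m|lborel. (\<theta> * a + (1 - \<theta>) * b) * p \<theta>)
      = (LINT \<theta>:message_set m|lborel. a * (\<theta> * p \<theta>) + (b * p \<theta> - b * (\<theta> * p \<theta>)))"
    by (intro set_lebesgue_integral_cong) (auto simp: algebra_simps)
  also have "\<dots> = a * message_moment m + (b * probM p best_message m - b * message_moment m)"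
    using set_integrable_message_set by (simp add: message_moment_def probM_def)
  finally show ?thesis
    by (simp add: algebra_simps)
qed

lemma set_integral_fun_upd_message_loss:
  "(LINT \<theta>:{0..1}|lborel. L ((v(m := t)) (best_message \<theta>)) \<theta> * p \<theta>)
     = (LINT \<theta>:{0..1}|lborel. L (v (best_message \<theta>)) \<theta> * p \<theta>)
       + (LINT \<theta>:message_set m|lborel. (L t \<theta> - L (v m) \<theta>) * p \<theta>)"
proof -
  define G where "G \<theta> = (if best_message \<theta> = m then L t \<theta> - L (v m) \<theta> else 0)" for \<theta>
  have "set_integrable lborel {0..1} (\<lambda>\<theta>. G \<theta> * p \<theta>)"
  proof (rule set_integrable_bounded_prior)
    show "\<bar>G \<theta>\<bar> \<le> (\<bar>L t 1\<bar> + \<bar>L t 0\<bar>) + (\<bar>L (v m) 1\<bar> + \<bar>L (v m) 0\<bar>)" if "\<theta> \<in> {0..1}" for \<theta>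
      using abs_Lw_le[OF that, of f1 f2 \<mu>1 \<mu>2 t] abs_Lw_le[OF that, of f1 f2 \<mu>1 \<mu>2 "v m"]
        abs_triangle_ineq4[of "L t \<theta>" "L (v m) \<theta>"]
      unfolding G_def by (simp split: if_split)
    show "G \<in> borel_measurable lborel"
      unfolding G_def Lw_def by measurable
  qed auto
  moreover have "set_integrable lborel {0..1} (\<lambda>\<theta>. L (v (best_message \<theta>)) \<theta> * p \<theta>)"
    using best_message(1) by (intro set_integrable_message_loss) (auto simp: Lw_def)
  moreover have "(LINT \<theta>:{0..1}|lborel. G \<theta> * p \<theta>) = (LINT \<theta>:message_set m|lborel. (L t \<theta> - L (v m) \<theta>) * p \<theta>)"
    unfolding set_lebesgue_integral_def G_def
    by (intro Bochner_Integration.integral_cong) (auto simp: indicator_def)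
  moreover have "L ((v(m := t)) (best_message \<theta>)) \<theta> * p \<theta> = L (v (best_message \<theta>)) \<theta> * p \<theta> + G \<theta> * p \<theta>" for \<theta>
    by (simp add: G_def algebra_simps)
  ultimately show ?thesis
    by simp
qed

theorem optimal_weight_eq_posterior_mean:
  assumes m: "m \<in> {1..n}"
  shows "v m * probM p best_message m = message_moment m"
proof (cases "probM p best_message m = 0")
  case True
  then show ?thesis
    using message_moment_bounds[of m] by simp
next
  case False
  define P T where "P = probM p best_message m" and "T = message_moment m"
  have "0 \<le> T" "T \<le> P" "P \<noteq> 0"
    using message_moment_bounds[of m] False by (simp_all add: P_def T_def)
  define t where "t = T / P"
  have t: "t \<in> {0..1}" and "P > 0"
    using \<open>0 \<le> T\<close> \<open>T \<le> P\<close> \<open>P \<noteq> 0\<close> by (auto simp: t_def)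
  have "(LINT \<theta>:message_set m|lborel. (L t \<theta> - L (v m) \<theta>) * p \<theta>)
      = (LINT \<theta>:message_set m|lborel. (\<theta> * (L t 1 - L (v m) 1) + (1 - \<theta>) * (L t 0 - L (v m) 0)) * p \<theta>)"
    by (intro set_lebesgue_integral_cong) (auto simp: Lw_def algebra_simps)
  also have "\<dots> = P * (L t t - L (v m) t)"
    unfolding set_integral_affine_message_set using \<open>P \<noteq> 0\<close>
    by (simp add: Lw_def t_def P_def T_def field_simps)
  finally have gain: "(LINT \<theta>:message_set m|lborel. (L t \<theta> - L (v m) \<theta>) * p \<theta>) = P * (L t t - L (v m) t)" .
  have "Lbar n f1 f2 \<mu>1 \<mu>2 p v \<le> Lbar n f1 f2 \<mu>1 \<mu>2 p (v(m := t))"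
    using v_range t by (intro v_opt) auto
  also have "\<dots> \<le> Lbar n f1 f2 \<mu>1 \<mu>2 p v + P * (L t t - L (v m) t)"
    using Lbar_le_best_message_loss[of "v(m := t)"]
    unfolding set_integral_fun_upd_message_loss gain Lbar_eq_best_message_loss .
  finally have "L (v m) t \<le> L t t"
    using \<open>P > 0\<close> by (simp add: zero_le_mult_iff)
  then have "v m = t"
    using Lw_own_weight_less[OF t v_range[OF m]] by force
  then show ?thesis
    using \<open>P \<noteq> 0\<close> by (simp add: t_def P_def T_def)
qed

section \<open>The equilibrium\<close>

lemma JP_mean_estimator:
  assumes "m \<in> {1..n}" "probM p best_message m \<noteq> 0"
  shows "JP p best_message (mean_estimator \<mu>1 \<mu>2) s m x1 x2
           = (if s = 1 then (1 - v m) * (x2 - \<mu>2)^2 else v m * (x1 - \<mu>1)^2)"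
proof -
  define a b where "a = (if s = 1 then 0 else (x1 - \<mu>1)^2)" and "b = (if s = 1 then (x2 - \<mu>2)^2 else 0)"
  have loss: "qloss \<theta> x1 x2 (mean_estimator \<mu>1 \<mu>2 (s, xsel s x1 x2) m) = \<theta> * a + (1 - \<theta>) * b" for \<theta>
    by (simp add: qloss_def mean_estimator_def xsel_def a_def b_def)
  have "JP p best_message (mean_estimator \<mu>1 \<mu>2) s m x1 x2 = a * v m + b * (1 - v m)"
    unfolding JP_def loss set_integral_affine_message_set
      optimal_weight_eq_posterior_mean[OF assms(1), symmetric]
    using assms(2) by (simp add: field_simps)
  then show ?thesis
    by (simp add: a_def b_def)
qed

lemma platform_best_response:
  assumes "m \<in> {1..n}"
  shows "JP p best_message (mean_estimator \<mu>1 \<mu>2) (wqd \<mu>1 \<mu>2 v m x1 x2) m x1 x2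
           \<le> JP p best_message (mean_estimator \<mu>1 \<mu>2) s m x1 x2"
proof (cases "probM p best_message m = 0")
  case True
  then show ?thesis
    by (simp add: JP_def)
next
  case False
  then show ?thesis
    using assms by (auto simp: JP_mean_estimator wqd_def)
qed

theorem BNE_wqd_mean_estimator: "BNE n f1 f2 p best_message (wqd \<mu>1 \<mu>2 v) (mean_estimator \<mu>1 \<mu>2)"
proof -
  have "(\<lambda>z. wqd \<mu>1 \<mu>2 v m (fst z) (snd z)) \<in> lborel \<Otimes>\<^sub>M lborel \<rightarrow>\<^sub>M count_space UNIV" for m
    unfolding wqd_def by measurable
  moreover have "(\<lambda>x. mean_estimator \<mu>1 \<mu>2 (s, x) m) \<in> borel_measurable lborel" for s m
    by (cases "s = 1") (simp_all add: mean_estimator_def)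
  moreover have "wqd \<mu>1 \<mu>2 v m x1 x2 \<in> {1, 2}" for m x1 x2
    by (simp add: wqd_def)
  ultimately show ?thesis
    unfolding BNE_def using best_message platform_best_response condpart_wqd_mean_estimator
    by (simp add: JR_wqd_mean_estimator)
qed

end

section \<open>Relabelling the messages\<close>

lemma Lbar_image_cong:
  assumes "u ` {1..n} = u' ` {1..n}"
  shows "Lbar n f1 f2 \<mu>1 \<mu>2 p u = Lbar n f1 f2 \<mu>1 \<mu>2 p u'"
proof -
  have "(\<lambda>i. Lw f1 f2 \<mu>1 \<mu>2 (u i) \<theta>) ` {1..n} = (\<lambda>i. Lw f1 f2 \<mu>1 \<mu>2 (u' i) \<theta>) ` {1..n}" for \<theta>
    using arg_cong[OF assms, of "image (\<lambda>x. Lw f1 f2 \<mu>1 \<mu>2 x \<theta>)"] by (simp only: image_image)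
  then show ?thesis
    unfolding Lbar_def by simp
qed

lemma sorting_permutation:
  fixes w :: "nat \<Rightarrow> 'a::linorder"
  obtains \<sigma> where "bij_betw \<sigma> {1..n} {1..n}"
    and "\<And>i j. i \<in> {1..n} \<Longrightarrow> j \<in> {1..n} \<Longrightarrow> i \<le> j \<Longrightarrow> w (\<sigma> i) \<le> w (\<sigma> j)"
proof
  define xs where "xs = sort_key w [1..<n+1]"
  have xs: "distinct xs" "set xs = {1..n}" "length xs = n" "sorted (map w xs)"
    by (auto simp: xs_def)
  have "bij_betw (\<lambda>i. i - 1) {1..n} {..<n}"
    by (rule bij_betw_byWitness[where f' = Suc]) auto
  from bij_betw_trans[OF this bij_betw_nth[OF xs(1)]]
  show "bij_betw (\<lambda>i. xs ! (i - 1)) {1..n} {1..n}"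
    using xs(2,3) by (simp add: comp_def)
  show "w (xs ! (i - 1)) \<le> w (xs ! (j - 1))" if "i \<in> {1..n}" "j \<in> {1..n}" "i \<le> j" for i j
    using sorted_nth_mono[OF xs(4), of "i - 1" "j - 1"] that xs(3) by auto
qed

theorem theorem2:
  fixes f1 f2 p :: "real \<Rightarrow> real" and \<mu>1 \<mu>2 :: real and n :: nat and w :: "nat \<Rightarrow> real"
  assumes n: "n \<ge> 1"
    and f1_meas: "f1 \<in> borel_measurable lborel"
    and f1_pos: "\<forall>x. f1 x > 0"
    and f1_int: "integrable lborel f1" and f1_one: "integral\<^sup>L lborel f1 = 1"
    and f1_mean_int: "integrable lborel (\<lambda>x. x * f1 x)"
    and f1_mean: "(LINT x|lborel. x * f1 x) = \<mu>1"
    and f1_sym: "\<forall>t. f1 (\<mu>1 + t) = f1 (\<mu>1 - t)"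
    and f1_var: "integrable lborel (\<lambda>x. x^2 * f1 x)"
    and f2_meas: "f2 \<in> borel_measurable lborel"
    and f2_pos: "\<forall>x. f2 x > 0"
    and f2_int: "integrable lborel f2" and f2_one: "integral\<^sup>L lborel f2 = 1"
    and f2_mean_int: "integrable lborel (\<lambda>x. x * f2 x)"
    and f2_mean: "(LINT x|lborel. x * f2 x) = \<mu>2"
    and f2_sym: "\<forall>t. f2 (\<mu>2 + t) = f2 (\<mu>2 - t)"
    and f2_var: "integrable lborel (\<lambda>x. x^2 * f2 x)"
    and p_meas: "p \<in> borel_measurable lborel"
    and p_nonneg: "\<forall>\<theta>\<in>{0..1}. p \<theta> \<ge> 0"
    and p_int: "set_integrable lborel {0..1} p"
    and p_one: "(LINT \<theta>:{0..1}|lborel. p \<theta>) = 1"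
    and w_range: "\<forall>i\<in>{1..n}. w i \<in> {0..1}"
    and w_opt: "\<forall>w'. (\<forall>i\<in>{1..n}. w' i \<in> {0..1}) \<longrightarrow>
                  Lbar n f1 f2 \<mu>1 \<mu>2 p w \<le> Lbar n f1 f2 \<mu>1 \<mu>2 p w'"
  shows "\<exists>\<sigma>. bij_betw \<sigma> {1..n} {1..n} \<and>
             (\<forall>i\<in>{1..n}. \<forall>j\<in>{1..n}. i \<le> j \<longrightarrow> w (\<sigma> i) \<le> w (\<sigma> j)) \<and>
             (\<exists>\<psi> \<eta>. BNE n f1 f2 p \<psi> (wqd \<mu>1 \<mu>2 (w \<circ> \<sigma>)) \<eta>)"
proof -
  obtain \<sigma> where \<sigma>: "bij_betw \<sigma> {1..n} {1..n}"
    and sorted: "\<And>i j. i \<in> {1..n} \<Longrightarrow> j \<in> {1..n} \<Longrightarrow> i \<le> j \<Longrightarrow> w (\<sigma> i) \<le> w (\<sigma> j)"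
    using sorting_permutation by blast
  have "(w \<circ> \<sigma>) ` {1..n} = w ` {1..n}"
    using bij_betw_imp_surj_on[OF \<sigma>] by (metis image_comp)
  then have "Lbar n f1 f2 \<mu>1 \<mu>2 p (w \<circ> \<sigma>) = Lbar n f1 f2 \<mu>1 \<mu>2 p w"
    by (rule Lbar_image_cong)
  moreover have "(w \<circ> \<sigma>) i \<in> {0..1}" if "i \<in> {1..n}" for i
    using w_range \<sigma> that by (auto simp: bij_betw_def)
  ultimately interpret optimal_wqd f1 f2 \<mu>1 \<mu>2 p n "w \<circ> \<sigma>"
    using n f1_meas f1_pos f1_int f1_one f1_mean_int f1_var f1_sym
      f2_meas f2_pos f2_int f2_one f2_mean_int f2_var f2_sym p_meas p_nonneg p_int w_opt
    by unfold_locales simp_all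
  show ?thesis
    using \<sigma> sorted BNE_wqd_mean_estimator by blast
qed

end
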